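(* Let $G$ be a finite simple graph, let $V_1\subset V(G)$ and $V_2=V(G)\setminus V_1$ with both nonempty, and let $G_1=G(V_1)$, $G_2=G(V_2)$, $V=V(G)$. Let $k$ be a positive integer and assume: (i) $\deg_G(x)\ge k$ for all $x\in V(G)$; (ii) $G_2$ is $k$-edge-connected; (iii) $\max_{x,y\in V}\delta(x,y)\le 2$. If at least one of the following holds: (a) $\Phi\ge k$; (b) $|\partial^1 V_1|\ge k$; (c) $V_1=\partial^1 V_1$; then $G$ is $k$-edge-connected.
   Context: For $A,B\subset V(G)$, $[A,B]$ denotes the set of edges $ab$ of $G$ with $a\in A$, $b\in B$; $[v,A]$ means $[\{v\},A]$. $\deg_G(v)=|[v,V(G)]|$. $G(A)$ is the induced subgraph on $A$. $d_G$ is graph distance and $d_G(v,A)=\min_{w\in A}d_G(v,w)$. A graph is $k$-edge-connected if every edge cut $[S,\bar S]$ ($\emptyset\ne S\subsetneq V$, $\bar S=V\setminus S$) has at least $k$ edges. Contracted distance: for $x,y\in V_1$, $\delta(x,y)=\min\{d_{G_1}(x,y),\, d_G(x,V_2)+d_G(y,V_2)\}$; for $x\in V$ and $y\in V_2$, $\delta(x,y)=\delta(y,x)=d_G(x,V_2)$. For $j\ge1$: $\partial^j V_1=\{x\in V_1: |[x,V_2]|\ge j\}$ and $i^j V_1=\{x\in V_1: |[x,V_2]|<j\}$. $\Phi=\sum_{x\in V_1}\min\{\max\{1,|[x,i^2V_1]|\},\,|[x,V_2]|\}$. *)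

theory Defs
  imports Main "HOL-Library.Extended_Nat"
begin

definition simple_graph :: "'a set \<Rightarrow> ('a \<Rightarrow> 'a \<Rightarrow> bool) \<Rightarrow> bool" where
  "simple_graph V E \<longleftrightarrow> finite V \<and> (\<forall>x y. E x y \<longrightarrow> E y x)
     \<and> (\<forall>x. \<not> E x x) \<and> (\<forall>x y. E x y \<longrightarrow> x \<in> V \<and> y \<in> V)"

definition edges_between :: "('a \<Rightarrow> 'a \<Rightarrow> bool) \<Rightarrow> 'a set \<Rightarrow> 'a set \<Rightarrow> 'a set set" where
  "edges_between E A B = {{a, b} | a b. a \<in> A \<and> b \<in> B \<and> E a b}"

definition degree :: "'a set \<Rightarrow> ('a \<Rightarrow> 'a \<Rightarrow> bool) \<Rightarrow> 'a \<Rightarrow> nat" where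
  "degree V E v = card (edges_between E {v} V)"

definition induced_edges :: "('a \<Rightarrow> 'a \<Rightarrow> bool) \<Rightarrow> 'a set \<Rightarrow> 'a \<Rightarrow> 'a \<Rightarrow> bool" where
  "induced_edges E A = (\<lambda>x y. x \<in> A \<and> y \<in> A \<and> E x y)"

definition k_edge_connected :: "'a set \<Rightarrow> ('a \<Rightarrow> 'a \<Rightarrow> bool) \<Rightarrow> nat \<Rightarrow> bool" where
  "k_edge_connected V E k \<longleftrightarrow>
     (\<forall>S. S \<noteq> {} \<and> S \<subset> V \<longrightarrow> card (edges_between E S (V - S)) \<ge> k)"

text \<open>Walks (as vertex lists) and graph distance (infinite if no walk).\<close>
definition walk :: "'a set \<Rightarrow> ('a \<Rightarrow> 'a \<Rightarrow> bool) \<Rightarrow> 'a list \<Rightarrow> bool" where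
  "walk V E xs \<longleftrightarrow> xs \<noteq> [] \<and> set xs \<subseteq> V \<and>
     (\<forall>i. Suc i < length xs \<longrightarrow> E (xs ! i) (xs ! Suc i))"

definition dist :: "'a set \<Rightarrow> ('a \<Rightarrow> 'a \<Rightarrow> bool) \<Rightarrow> 'a \<Rightarrow> 'a \<Rightarrow> enat" where
  "dist V E x y = Inf {enat (length xs - 1) | xs. walk V E xs \<and> hd xs = x \<and> last xs = y}"

definition dist_set :: "'a set \<Rightarrow> ('a \<Rightarrow> 'a \<Rightarrow> bool) \<Rightarrow> 'a \<Rightarrow> 'a set \<Rightarrow> enat" where
  "dist_set V E x A = (INF w\<in>A. dist V E x w)"

definition cdist :: "'a set \<Rightarrow> ('a \<Rightarrow> 'a \<Rightarrow> bool) \<Rightarrow> 'a set \<Rightarrow> 'a \<Rightarrow> 'a \<Rightarrow> enat" where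
  "cdist V E V1 x y =
    (if x \<in> V1 \<and> y \<in> V1 then
       min (dist V1 (induced_edges E V1) x y)
           (dist_set V E x (V - V1) + dist_set V E y (V - V1))
     else if y \<in> V - V1 then dist_set V E x (V - V1)
     else dist_set V E y (V - V1))"

definition boundary :: "('a \<Rightarrow> 'a \<Rightarrow> bool) \<Rightarrow> 'a set \<Rightarrow> 'a set \<Rightarrow> nat \<Rightarrow> 'a set" where
  "boundary E V1 V2 j = {x \<in> V1. card (edges_between E {x} V2) \<ge> j}"

definition interior :: "('a \<Rightarrow> 'a \<Rightarrow> bool) \<Rightarrow> 'a set \<Rightarrow> 'a set \<Rightarrow> nat \<Rightarrow> 'a set" where
  "interior E V1 V2 j = {x \<in> V1. card (edges_between E {x} V2) < j}"

definition Phi :: "('a \<Rightarrow> 'a \<Rightarrow> bool) \<Rightarrow> 'a set \<Rightarrow> 'a set \<Rightarrow> nat" where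
  "Phi E V1 V2 = (\<Sum>x\<in>V1. min (max 1 (card (edges_between E {x} (interior E V1 V2 2))))
                                 (card (edges_between E {x} V2)))"

end

theory Submission
  imports Defs
begin

text \<open>
  Let G = (V, E) be split into V1 and V2 = V - V1, where G(V2) is k-edge-connected,
  every vertex has degree at least k, and the contracted distance is at most 2.
  A cut [S, V - S] of G either splits V2, and then contains a cut of G(V2), or has
  one side inside V1; by symmetry say S \<subseteq> V1. Such a cut consists of the edges
  from S to V2 and those from V1 - S to S. If it had fewer than k edges, the degree
  bound would give a vertex x0 \<in> S with all neighbours in S; the contracted distance
  bound then provides an edge from S to V2 and a neighbour in S for every vertex of
  V1 - S, and each of the hypotheses (a) \<Phi> \<ge> k, (b) |\<partial>V1| \<ge> k, (c) V1 = \<partial>V1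
  (with \<partial>V1 the vertices of V1 having a neighbour in V2) bounds the two parts of
  the cut from below by k, a contradiction.
\<close>

section \<open>Counting neighbours and cut edges\<close>

definition nbr_count :: "('a \<Rightarrow> 'a \<Rightarrow> bool) \<Rightarrow> 'a \<Rightarrow> 'a set \<Rightarrow> nat" where
  "nbr_count E x A = card {w\<in>A. E x w}"

lemma card_edges_from_vertex: "card (edges_between E {x} A) = nbr_count E x A"
proof -
  have "edges_between E {x} A = (\<lambda>w. {x,w}) ` {w\<in>A. E x w}"
    unfolding edges_between_def by auto
  then show ?thesis
    unfolding nbr_count_def by (simp add: card_image inj_on_def doubleton_eq_iff)
qed

lemma nbr_count_Un:
  "finite A \<Longrightarrow> finite B \<Longrightarrow> A \<inter> B = {} \<Longrightarrow> nbr_count E x (A \<union> B) = nbr_count E x A + nbr_count E x B"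
  unfolding nbr_count_def by (subst card_Un_disjoint[symmetric]) (auto intro: arg_cong[where f = card])

lemma nbr_count_mono: "finite B \<Longrightarrow> A \<subseteq> B \<Longrightarrow> nbr_count E x A \<le> nbr_count E x B"
  unfolding nbr_count_def by (rule card_mono) auto

lemma nbr_count_pos: "finite A \<Longrightarrow> 1 \<le> nbr_count E x A \<longleftrightarrow> (\<exists>w\<in>A. E x w)"
  unfolding nbr_count_def by (auto simp: Suc_le_eq card_gt_0_iff)

lemma nbr_count_self:
  assumes "finite A" "x \<in> A" "\<not> E x x"
  shows "nbr_count E x A \<le> card A - 1"
proof -
  have "nbr_count E x A \<le> card (A - {x})"
    unfolding nbr_count_def using assms by (intro card_mono) auto
  then show ?thesis using assms by simp
qed

lemma card_edges_between:
  assumes "finite A" "finite B" "A \<inter> B = {}"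
  shows "card (edges_between E A B) = (\<Sum>a\<in>A. nbr_count E a B)"
proof -
  define P where "P = Sigma A (\<lambda>a. {b\<in>B. E a b})"
  have "edges_between E A B = (\<lambda>(a,b). {a,b}) ` P"
    unfolding edges_between_def P_def by auto
  moreover have "inj_on (\<lambda>(a,b). {a,b}) P"
    using assms(3) unfolding P_def by (auto simp: inj_on_def doubleton_eq_iff)
  ultimately have "card (edges_between E A B) = card P" by (simp add: card_image)
  then show ?thesis
    unfolding P_def nbr_count_def using assms by (simp add: card_SigmaI)
qed

lemma edges_between_sym:
  assumes "\<And>x y. E x y \<Longrightarrow> E y x"
  shows "edges_between E A B = edges_between E B A"
  unfolding edges_between_def using assms by (auto simp: insert_commute)

lemma double_counting:
  assumes "\<And>x y. E x y \<Longrightarrow> E y x" "finite A" "finite B" "A \<inter> B = {}"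
  shows "(\<Sum>a\<in>A. nbr_count E a B) = (\<Sum>b\<in>B. nbr_count E b A)"
  using card_edges_between[of A B E] card_edges_between[of B A E]
    edges_between_sym[of E A B] assms by (simp add: Int_commute)

lemma cut_decomposition:
  assumes G: "simple_graph V E" and S: "S \<subseteq> V1" and V1: "V1 \<subseteq> V"
  shows "card (edges_between E S (V - S))
           = (\<Sum>a\<in>S. nbr_count E a (V - V1)) + (\<Sum>b\<in>V1 - S. nbr_count E b S)"
proof -
  have fin: "finite V" and sym: "\<And>x y. E x y \<Longrightarrow> E y x"
    using G unfolding simple_graph_def by auto
  have finite: "finite S" "finite V1" using fin S V1 by (auto intro: finite_subset)
  have split: "V - S = (V - V1) \<union> (V1 - S)" using S V1 by auto
  have "card (edges_between E S (V - S)) = (\<Sum>a\<in>S. nbr_count E a (V - S))"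
    using finite fin by (intro card_edges_between) auto
  also have "\<dots> = (\<Sum>a\<in>S. nbr_count E a (V - V1)) + (\<Sum>a\<in>S. nbr_count E a (V1 - S))"
    unfolding split sum.distrib[symmetric] using finite fin
    by (intro sum.cong refl nbr_count_Un) auto
  also have "(\<Sum>a\<in>S. nbr_count E a (V1 - S)) = (\<Sum>b\<in>V1 - S. nbr_count E b S)"
    using finite sym by (intro double_counting) auto
  finally show ?thesis .
qed

lemma induced_cut_le:
  assumes "finite V" "S \<subseteq> V" "A \<subseteq> V"
  shows "card (edges_between (induced_edges E A) (S \<inter> A) (A - S \<inter> A))
           \<le> card (edges_between E S (V - S))"
proof (rule card_mono)
  have "edges_between E S (V - S) \<subseteq> Pow V"
    using assms(2) unfolding edges_between_def by auto
  then show "finite (edges_between E S (V - S))"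
    using assms(1) by (rule finite_subset[OF _ finite_Pow_iff[THEN iffD2]])
  show "edges_between (induced_edges E A) (S \<inter> A) (A - S \<inter> A) \<subseteq> edges_between E S (V - S)"
    using assms(3) unfolding edges_between_def induced_edges_def by fast
qed

section \<open>Short distances\<close>

lemma walk_Cons_Cons: "walk V E (a # b # xs) \<longleftrightarrow> a \<in> V \<and> E a b \<and> walk V E (b # xs)"
  unfolding walk_def by (auto simp: nth_Cons split: nat.splits)

lemma walk_single: "walk V E [a] \<longleftrightarrow> a \<in> V"
  unfolding walk_def by simp

lemma walk_of_dist_less:
  assumes "dist V E x y < enat n"
  obtains xs where "walk V E xs" "hd xs = x" "last xs = y" "length xs \<le> n"
proof -
  from assms obtain xs where "walk V E xs" "hd xs = x" "last xs = y" "enat (length xs - 1) < enat n"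
    unfolding dist_def Inf_less_iff by auto
  moreover have "xs \<noteq> []" using \<open>walk V E xs\<close> unfolding walk_def by simp
  ultimately show thesis using that by simp
qed

lemma short_walk_cases [consumes 2]:
  assumes "walk V E xs" "length xs \<le> 3"
  obtains "length xs = 1" "hd xs = last xs"
    | "length xs = 2" "E (hd xs) (last xs)"
    | z where "length xs = 3" "z \<in> V" "E (hd xs) z" "E z (last xs)"
proof -
  have "xs \<noteq> []" using assms(1) unfolding walk_def by simp
  then consider a where "xs = [a]" | a b where "xs = [a, b]" | a b c where "xs = [a, b, c]"
    using assms(2) by (cases xs; cases "tl xs"; cases "tl (tl xs)") auto
  then show thesis
    using assms(1) that by cases (auto simp: walk_Cons_Cons walk_single)
qed

lemma dist_less_1:
  assumes "dist V E x y < 1" shows "x = y"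
proof -
  obtain xs where walk: "walk V E xs" and len: "length xs \<le> 1" and ends: "hd xs = x" "last xs = y"
    using assms by (auto simp: one_enat_def elim: walk_of_dist_less)
  from len have "length xs \<le> 3" by simp
  with walk show ?thesis using ends len by (cases rule: short_walk_cases) auto
qed

lemma dist_less_2:
  assumes "dist V E x y < 2" shows "x = y \<or> E x y"
proof -
  obtain xs where walk: "walk V E xs" and len: "length xs \<le> 2" and ends: "hd xs = x" "last xs = y"
    using assms by (auto simp: numeral_eq_enat elim: walk_of_dist_less)
  from len have "length xs \<le> 3" by simp
  with walk show ?thesis using ends len by (cases rule: short_walk_cases) auto
qed

lemma dist_less_3:
  assumes "dist V E x y < 3" shows "x = y \<or> E x y \<or> (\<exists>z\<in>V. E x z \<and> E z y)"
proof -
  obtain xs where walk: "walk V E xs" and len: "length xs \<le> 3" and ends: "hd xs = x" "last xs = y"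
    using assms by (auto simp: numeral_eq_enat elim: walk_of_dist_less)
  from walk len show ?thesis using ends by (cases rule: short_walk_cases) auto
qed

lemma dist_set_less: "dist_set V E x A < c \<Longrightarrow> \<exists>w\<in>A. dist V E x w < c"
  unfolding dist_set_def by (simp add: INF_less_iff)

section \<open>A small cut forces a vertex with all neighbours on its own side\<close>

text \<open>For 1 \<le> s \<le> k: k \<le> s(k + 1 - s), since the difference is (s - 1)(k - s).\<close>
lemma product_bound: "1 \<le> (s::nat) \<Longrightarrow> s \<le> k \<Longrightarrow> k \<le> s * (k + 1 - s)"
proof -
  assume "1 \<le> s" "s \<le> k"
  then obtain t where "k = s + t" using le_Suc_ex by blast
  with \<open>1 \<le> s\<close> show ?thesis by (simp add: algebra_simps)
qed

text \<open>If every vertex of a nonempty S has degree at least k but fewer than k edges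
  leave S, then some vertex of S has no neighbour outside S: if |S| \<le> k, each vertex
  of S sends at least k + 1 - |S| edges out, giving at least |S|(k + 1 - |S|) \<ge> k;
  so |S| > k, and then not every vertex can send an edge out.\<close>
lemma small_cut_inner_vertex:
  assumes G: "simple_graph V E" and S: "S \<subseteq> V" "S \<noteq> {}"
    and deg: "\<And>x. x \<in> S \<Longrightarrow> k \<le> nbr_count E x V"
    and cut: "(\<Sum>a\<in>S. nbr_count E a (V - S)) < k"
  obtains x0 where "x0 \<in> S" "\<And>w. E x0 w \<Longrightarrow> w \<in> S"
proof -
  have fin: "finite V" and irr: "\<And>x. \<not> E x x" and inV: "\<And>x y. E x y \<Longrightarrow> y \<in> V"
    using G unfolding simple_graph_def by auto
  have finS: "finite S" using fin S(1) by (rule rev_finite_subset)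
  have card_S: "1 \<le> card S" using S(2) finS by (simp add: Suc_le_eq card_gt_0_iff)
  have out_edges: "k + 1 - card S \<le> nbr_count E x (V - S)" if "x \<in> S" for x
  proof -
    have "nbr_count E x V = nbr_count E x S + nbr_count E x (V - S)"
      using nbr_count_Un[of S "V - S" E x] S(1) finS fin by (simp add: Un_absorb1)
    moreover have "nbr_count E x S \<le> card S - 1" using finS that irr by (rule nbr_count_self)
    ultimately show ?thesis using deg[OF that] card_S by linarith
  qed
  have "k < card S"
  proof (rule ccontr)
    assume "\<not> k < card S"
    then have "k \<le> card S * (k + 1 - card S)" using card_S product_bound by simp
    also have "\<dots> \<le> (\<Sum>a\<in>S. nbr_count E a (V - S))"
      using sum_mono[OF out_edges] by simp
    finally show False using cut by simp
  qed
  then have "\<not> (\<forall>x\<in>S. 1 \<le> nbr_count E x (V - S))"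
    using sum_mono[of S "\<lambda>_. 1" "\<lambda>a. nbr_count E a (V - S)"] cut by auto
  then obtain x0 where "x0 \<in> S" "\<not> (\<exists>w\<in>V - S. E x0 w)"
    using nbr_count_pos[of "V - S" E] fin by auto
  then show thesis using that inV by blast
qed

section \<open>Consequences of the contracted diameter bound\<close>

lemma two_steps_to_V2:
  assumes x0: "x0 \<in> V1" and w2: "w2 \<in> V - V1" and diam: "cdist V E V1 x0 w2 \<le> 2"
    and no_edge: "\<And>w. w \<in> V - V1 \<Longrightarrow> \<not> E x0 w"
  obtains z w where "w \<in> V - V1" "E x0 z" "E z w"
proof -
  have "dist_set V E x0 (V - V1) < 3"
    using diam x0 w2 unfolding cdist_def by (cases "dist_set V E x0 (V - V1)") (auto simp: numeral_eq_enat)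
  then obtain w where w: "w \<in> V - V1" "dist V E x0 w < 3" by (auto dest: dist_set_less)
  moreover have "x0 \<noteq> w" using w x0 by auto
  ultimately show thesis using dist_less_3[OF w(2)] no_edge that by blast
qed

text \<open>Two non-adjacent vertices of V1 at contracted distance at most 2, the first of
  which has no neighbour in V2, have a common neighbour: a detour through V2 would
  cost at least 2 + 1 steps.\<close>
lemma common_neighbour_in_V1:
  assumes x0: "x0 \<in> V1" and v: "v \<in> V1" "x0 \<noteq> v" "\<not> E x0 v"
    and diam: "cdist V E V1 x0 v \<le> 2"
    and no_edge: "\<And>w. w \<in> V - V1 \<Longrightarrow> \<not> E x0 w"
  obtains z where "E x0 z" "E z v"
proof (cases "dist V1 (induced_edges E V1) x0 v < 3")
  case True
  then show thesis
    using dist_less_3[OF True] v that unfolding induced_edges_def by blast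
next
  case False
  have far_x0: "\<not> dist_set V E x0 (V - V1) < 2"
    using no_edge x0 by (auto dest!: dist_set_less dist_less_2)
  have far_v: "\<not> dist_set V E v (V - V1) < 1"
    using v by (auto dest!: dist_set_less dist_less_1)
  have "(2::enat) + 1 \<le> dist_set V E x0 (V - V1) + dist_set V E v (V - V1)"
    using far_x0 far_v by (intro add_mono) auto
  also have "\<dots> \<le> 2"
    using diam False x0 v unfolding cdist_def
    by (cases "dist V1 (induced_edges E V1) x0 v") (auto simp: numeral_eq_enat min_le_iff_disj)
  finally show thesis by (simp add: numeral_eq_enat one_enat_def)
qed

lemma inner_vertex_spreads:
  assumes G: "simple_graph V E" and V1: "V1 \<subseteq> V" "V - V1 \<noteq> {}"
    and diam: "\<forall>x\<in>V. \<forall>y\<in>V. cdist V E V1 x y \<le> 2"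
    and S: "S \<subseteq> V1" and x0: "x0 \<in> S" and inner: "\<And>w. E x0 w \<Longrightarrow> w \<in> S"
  shows "1 \<le> (\<Sum>a\<in>S. nbr_count E a (V - V1))"
    and "\<And>t. t \<in> V1 - S \<Longrightarrow> 1 \<le> nbr_count E t S"
proof -
  have fin: "finite V" and sym: "\<And>x y. E x y \<Longrightarrow> E y x"
    using G unfolding simple_graph_def by auto
  have finS: "finite S" using fin S V1(1) by (auto intro: rev_finite_subset)
  have x0V: "x0 \<in> V1" "x0 \<in> V" using x0 S V1 by auto
  have no_edge: "\<And>w. w \<in> V - V1 \<Longrightarrow> \<not> E x0 w" using inner S by blast
  obtain w2 where w2: "w2 \<in> V - V1" using V1(2) by blast
  moreover have "cdist V E V1 x0 w2 \<le> 2" using diam x0V w2 by blast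
  ultimately obtain z w where "w \<in> V - V1" "E x0 z" "E z w"
    using two_steps_to_V2[OF x0V(1)] no_edge by blast
  then have "z \<in> S" "1 \<le> nbr_count E z (V - V1)"
    using inner nbr_count_pos[of "V - V1" E z] fin by auto
  then show "1 \<le> (\<Sum>a\<in>S. nbr_count E a (V - V1))"
    using finS by (meson member_le_sum order_trans zero_le)
  fix t assume t: "t \<in> V1 - S"
  obtain z where "E x0 z" "E z t"
    using common_neighbour_in_V1[OF x0V(1), of t] t x0 inner no_edge diam x0V V1(1) by blast
  then show "1 \<le> nbr_count E t S" using inner sym nbr_count_pos[OF finS] by blast
qed

section \<open>Lower bounds for the cut of a subset of V1\<close>

text \<open>The right-hand sides below are the two parts of the cut given by
  cut_decomposition; each lemma bounds one quantity of the hypotheses from above by them.\<close>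

lemma boundary_le_cut_parts:
  assumes fin: "finite V1" and S: "S \<subseteq> V1"
    and reach: "\<And>t. t \<in> V1 - S \<Longrightarrow> 1 \<le> nbr_count E t S"
  shows "card (boundary E V1 V2 1) \<le> (\<Sum>a\<in>S. nbr_count E a V2) + (\<Sum>t\<in>V1 - S. nbr_count E t S)"
proof -
  let ?B = "boundary E V1 V2 1"
  have B: "?B = {x\<in>V1. 1 \<le> nbr_count E x V2}"
    unfolding boundary_def card_edges_from_vertex ..
  have finS: "finite S" using fin S by (rule rev_finite_subset)
  have "card ?B \<le> card (S \<inter> ?B) + card (V1 - S)"
    using card_Un_le[of "S \<inter> ?B" "V1 - S"] card_mono[of "(S \<inter> ?B) \<union> (V1 - S)" ?B] fin finS
    unfolding B by fastforce
  moreover have "card (S \<inter> ?B) \<le> (\<Sum>a\<in>S. nbr_count E a V2)"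
  proof -
    have "card (S \<inter> ?B) \<le> (\<Sum>a\<in>S \<inter> ?B. nbr_count E a V2)"
      using sum_mono[of "S \<inter> ?B" "\<lambda>_. 1" "\<lambda>a. nbr_count E a V2"] B by auto
    also have "\<dots> \<le> (\<Sum>a\<in>S. nbr_count E a V2)" using finS by (intro sum_mono2) auto
    finally show ?thesis .
  qed
  moreover have "card (V1 - S) \<le> (\<Sum>t\<in>V1 - S. nbr_count E t S)"
    using sum_mono[of "V1 - S" "\<lambda>_. 1" "\<lambda>t. nbr_count E t S"] reach by simp
  ultimately show ?thesis by linarith
qed

text \<open>If every vertex outside S sends at least two edges to V2, then the vertices
  with fewer than two edges to V2 all lie in S, and \<Phi> is bounded termwise.\<close>
lemma Phi_le_cut_parts:
  assumes fin: "finite V1" and S: "S \<subseteq> V1"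
    and reach: "\<And>t. t \<in> V1 - S \<Longrightarrow> 1 \<le> nbr_count E t S"
    and many: "\<And>t. t \<in> V1 - S \<Longrightarrow> 2 \<le> nbr_count E t V2"
  shows "Phi E V1 V2 \<le> (\<Sum>a\<in>S. nbr_count E a V2) + (\<Sum>t\<in>V1 - S. nbr_count E t S)"
proof -
  let ?I = "interior E V1 V2 2"
  let ?f = "\<lambda>x. min (max 1 (nbr_count E x ?I)) (nbr_count E x V2)"
  have finS: "finite S" using fin S by (rule rev_finite_subset)
  have I: "?I \<subseteq> S" using many unfolding interior_def card_edges_from_vertex by force
  have "Phi E V1 V2 = (\<Sum>x\<in>S. ?f x) + (\<Sum>x\<in>V1 - S. ?f x)"
    unfolding Phi_def card_edges_from_vertex using fin S by (simp add: sum.subset_diff)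
  moreover have "(\<Sum>x\<in>S. ?f x) \<le> (\<Sum>a\<in>S. nbr_count E a V2)"
    by (intro sum_mono) simp
  moreover have "(\<Sum>x\<in>V1 - S. ?f x) \<le> (\<Sum>t\<in>V1 - S. nbr_count E t S)"
  proof (intro sum_mono)
    fix t assume "t \<in> V1 - S"
    then have "max 1 (nbr_count E t ?I) \<le> nbr_count E t S"
      using reach nbr_count_mono[OF finS I] by simp
    then show "?f t \<le> nbr_count E t S" by (simp add: min_le_iff_disj)
  qed
  ultimately show ?thesis by linarith
qed

text \<open>A vertex u outside S with at most one edge to V2 already forces the cut to
  have size at least deg(u): its neighbours in V1 - S are compensated by the edges
  from V1 - S back to S, and its possible edge to V2 by an edge from S to V2.\<close>
lemma low_vertex_le_cut_parts:
  assumes G: "simple_graph V E" and V1: "V1 \<subseteq> V" and S: "S \<subseteq> V1"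
    and u: "u \<in> V1 - S" "nbr_count E u (V - V1) \<le> 1"
    and S_to_V2: "1 \<le> (\<Sum>a\<in>S. nbr_count E a (V - V1))"
    and reach: "\<And>t. t \<in> V1 - S \<Longrightarrow> 1 \<le> nbr_count E t S"
  shows "nbr_count E u V \<le> (\<Sum>a\<in>S. nbr_count E a (V - V1)) + (\<Sum>t\<in>V1 - S. nbr_count E t S)"
proof -
  have fin: "finite V" and irr: "\<not> E u u" using G unfolding simple_graph_def by auto
  have finite: "finite S" "finite (V1 - S)" "finite (V - V1)"
    using fin V1 S by (auto intro: rev_finite_subset)
  have "nbr_count E u (S \<union> (V1 - S) \<union> (V - V1))
          = nbr_count E u S + nbr_count E u (V1 - S) + nbr_count E u (V - V1)"
    using finite S nbr_count_Un[of S "V1 - S" E u] by (subst nbr_count_Un) auto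
  moreover have "S \<union> (V1 - S) \<union> (V - V1) = V" using S V1 by auto
  ultimately have "nbr_count E u V = nbr_count E u S + nbr_count E u (V1 - S) + nbr_count E u (V - V1)"
    by simp
  moreover have "nbr_count E u (V1 - S) \<le> card (V1 - S) - 1"
    using finite(2) u(1) irr by (rule nbr_count_self)
  moreover have "card (V1 - S) - 1 \<le> (\<Sum>t\<in>V1 - S - {u}. nbr_count E t S)"
    using sum_mono[of "V1 - S - {u}" "\<lambda>_. 1" "\<lambda>t. nbr_count E t S"] reach u(1) finite(2) by simp
  moreover have "(\<Sum>t\<in>V1 - S. nbr_count E t S) = nbr_count E u S + (\<Sum>t\<in>V1 - S - {u}. nbr_count E t S)"
    using u(1) finite(2) by (simp add: sum.remove)
  ultimately show ?thesis using u(2) S_to_V2 by linarith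
qed

lemma cut_parts_ge_k:
  assumes G: "simple_graph V E" and V1: "V1 \<subseteq> V" and S: "S \<subseteq> V1"
    and deg: "\<And>x. x \<in> V \<Longrightarrow> k \<le> nbr_count E x V"
    and cases: "Phi E V1 (V - V1) \<ge> k \<or> card (boundary E V1 (V - V1) 1) \<ge> k
                \<or> V1 = boundary E V1 (V - V1) 1"
    and x0: "x0 \<in> S" "\<And>w. w \<in> V - V1 \<Longrightarrow> \<not> E x0 w"
    and S_to_V2: "1 \<le> (\<Sum>a\<in>S. nbr_count E a (V - V1))"
    and reach: "\<And>t. t \<in> V1 - S \<Longrightarrow> 1 \<le> nbr_count E t S"
  shows "k \<le> (\<Sum>a\<in>S. nbr_count E a (V - V1)) + (\<Sum>t\<in>V1 - S. nbr_count E t S)"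
    (is "k \<le> ?parts")
proof -
  have fin: "finite V" using G unfolding simple_graph_def by auto
  have finV1: "finite V1" using fin V1 by (rule rev_finite_subset)
  from cases show ?thesis
  proof (elim disjE)
    assume Phi: "k \<le> Phi E V1 (V - V1)"
    show ?thesis
    proof (cases "\<exists>u\<in>V1 - S. nbr_count E u (V - V1) \<le> 1")
      case True
      then obtain u where u: "u \<in> V1 - S" "nbr_count E u (V - V1) \<le> 1" by blast
      then have "nbr_count E u V \<le> ?parts"
        using low_vertex_le_cut_parts[OF G V1 S] S_to_V2 reach by blast
      then show ?thesis using deg u(1) V1 by fastforce
    next
      case False
      then have "Phi E V1 (V - V1) \<le> ?parts"
        by (intro Phi_le_cut_parts[OF finV1 S] reach) (auto simp: not_le Suc_le_eq numeral_2_eq_2)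
      then show ?thesis using Phi by linarith
    qed
  next
    assume "k \<le> card (boundary E V1 (V - V1) 1)"
    moreover have "card (boundary E V1 (V - V1) 1) \<le> ?parts"
      by (intro boundary_le_cut_parts[OF finV1 S] reach)
    ultimately show ?thesis by linarith
  next
    assume "V1 = boundary E V1 (V - V1) 1"
    then have "1 \<le> nbr_count E x0 (V - V1)"
      using x0(1) S unfolding boundary_def card_edges_from_vertex by blast
    then show ?thesis using x0(2) nbr_count_pos[of "V - V1" E x0] fin by blast
  qed
qed

text \<open>A smaller cut contains a vertex x0 with all neighbours in S; then the diameter
  bound applies (inner_vertex_spreads) and the cut is large after all.\<close>
lemma cut_inside_V1:
  assumes G: "simple_graph V E" and V1: "V1 \<subseteq> V" "V - V1 \<noteq> {}"
    and deg: "\<forall>x\<in>V. degree V E x \<ge> k"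
    and diam: "\<forall>x\<in>V. \<forall>y\<in>V. cdist V E V1 x y \<le> 2"
    and cases: "Phi E V1 (V - V1) \<ge> k \<or> card (boundary E V1 (V - V1) 1) \<ge> k
                \<or> V1 = boundary E V1 (V - V1) 1"
    and S: "S \<subseteq> V1" "S \<noteq> {}"
  shows "k \<le> card (edges_between E S (V - S))"
proof (rule ccontr)
  assume small: "\<not> k \<le> card (edges_between E S (V - S))"
  have fin: "finite V" using G unfolding simple_graph_def by auto
  have deg': "\<And>x. x \<in> V \<Longrightarrow> k \<le> nbr_count E x V"
    using deg unfolding degree_def card_edges_from_vertex by blast
  have SV: "S \<subseteq> V" using S(1) V1(1) by blast
  have "card (edges_between E S (V - S)) = (\<Sum>a\<in>S. nbr_count E a (V - S))"
    using fin SV by (intro card_edges_between) (auto intro: rev_finite_subset)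
  with small have "(\<Sum>a\<in>S. nbr_count E a (V - S)) < k" by simp
  then obtain x0 where x0: "x0 \<in> S" and inner: "\<And>w. E x0 w \<Longrightarrow> w \<in> S"
    using small_cut_inner_vertex[OF G SV S(2)] deg' SV by blast
  have no_edge: "\<And>w. w \<in> V - V1 \<Longrightarrow> \<not> E x0 w" using inner S(1) by blast
  note spreads = inner_vertex_spreads[OF G V1 diam S(1) x0 inner]
  have "k \<le> card (edges_between E S (V - S))"
    unfolding cut_decomposition[OF G S(1) V1(1)]
    by (rule cut_parts_ge_k[OF G V1(1) S(1)]) (use deg' cases x0 no_edge spreads in auto)
  with small show False ..
qed

text \<open>Every cut either splits V2, and then contains a cut of the k-edge-connected
  G(V2), or has one of its two sides inside V1, where cut_inside_V1 applies.\<close>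
theorem corollary1:
  fixes V V1 :: "'a set" and E :: "'a \<Rightarrow> 'a \<Rightarrow> bool" and k :: nat
  assumes G: "simple_graph V E"
    and V1: "V1 \<subseteq> V" "V1 \<noteq> {}" "V - V1 \<noteq> {}"
    and k: "k > 0"
    and deg: "\<forall>x\<in>V. degree V E x \<ge> k"
    and conn2: "k_edge_connected (V - V1) (induced_edges E (V - V1)) k"
    and diam: "\<forall>x\<in>V. \<forall>y\<in>V. cdist V E V1 x y \<le> 2"
    and cases: "Phi E V1 (V - V1) \<ge> k \<or> card (boundary E V1 (V - V1) 1) \<ge> k
                \<or> V1 = boundary E V1 (V - V1) 1"
  shows "k_edge_connected V E k"
  unfolding k_edge_connected_def
proof (intro allI impI)
  fix S assume S: "S \<noteq> {} \<and> S \<subset> V"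
  have fin: "finite V" and sym: "\<And>x y. E x y \<Longrightarrow> E y x"
    using G unfolding simple_graph_def by auto
  note inside_V1 = cut_inside_V1[OF G V1(1) V1(3) deg diam cases]
  consider (splits_V2) "S \<inter> (V - V1) \<noteq> {}" "(V - V1) - S \<noteq> {}"
    | (inside) "S \<inter> (V - V1) = {}" | (contains_V2) "(V - V1) - S = {}" by blast
  then show "k \<le> card (edges_between E S (V - S))"
  proof cases
    case splits_V2
    then have "S \<inter> (V - V1) \<noteq> {} \<and> S \<inter> (V - V1) \<subset> V - V1" by blast
    then have "k \<le> card (edges_between (induced_edges E (V - V1)) (S \<inter> (V - V1)) ((V - V1) - S \<inter> (V - V1)))"
      using conn2 unfolding k_edge_connected_def by simp
    moreover have "S \<subseteq> V" "V - V1 \<subseteq> V" using S by auto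
    ultimately show ?thesis using induced_cut_le[OF fin, of S "V - V1" E] by linarith
  next
    case inside
    then have "S \<subseteq> V1" using S by blast
    then show ?thesis using inside_V1 S by blast
  next
    case contains_V2
    then have "V - S \<subseteq> V1" "V - S \<noteq> {}" using S by blast+
    have "V - (V - S) = S" using S by blast
    then have "edges_between E (V - S) (V - (V - S)) = edges_between E S (V - S)"
      using edges_between_sym[OF sym] by simp
    then show ?thesis using inside_V1[OF \<open>V - S \<subseteq> V1\<close> \<open>V - S \<noteq> {}\<close>] by simp
  qed
qed

end
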